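(* For $n\ge 1$ let $X(n)$ be the $\Delta$-complex with vertex set $\{-n,-(n-1),\dots,-1,1,2,\dots,n\}$ which has one $p$-simplex for every ordered sequence $(a_0,\dots,a_p)$ of $p+1$ vertices whose absolute values $|a_0|,\dots,|a_p|$ are pairwise distinct, the faces of this simplex being the simplices given by the ordered subsequences. Then $X(n)$ is $(n-1)$-spherical.
   Context: A polyhedron $Y$ is called $d$-spherical if $Y$ is nonempty and its reduced integral homology satisfies $\tilde H_i(Y)=0$ for all $i\neq d$. *)

theory Defs
  imports Main
begin

text \<open>A Delta-complex whose p-simplices are ordered lists of length p+1 (of vertices),
  with the i-th face obtained by deleting the i-th entry.  A set K of lists closed under
  deletion describes such a complex; the empty list plays the role of the unique
  (-1)-simplex of the augmented chain complex, so the homology of the chain complex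
  below is the reduced integral homology.\<close>

definition del_nth :: "nat \<Rightarrow> 'a list \<Rightarrow> 'a list" where
  "del_nth i xs = take i xs @ drop (Suc i) xs"

text \<open>Integral chains supported on simplices with k vertices (dimension k-1).\<close>
definition is_chain :: "'a list set \<Rightarrow> nat \<Rightarrow> ('a list \<Rightarrow> int) \<Rightarrow> bool" where
  "is_chain K k c \<longleftrightarrow> (\<forall>s. c s \<noteq> 0 \<longrightarrow> s \<in> K \<and> length s = k)"

definition delta_bd :: "'a list set \<Rightarrow> ('a list \<Rightarrow> int) \<Rightarrow> ('a list \<Rightarrow> int)" where
  "delta_bd K c = (\<lambda>t. \<Sum>s\<in>{s\<in>K. length s = Suc (length t)}.
       c s * (\<Sum>i<length s. if del_nth i s = t then (-1) ^ i else 0))"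

definition reduced_homology_vanishes :: "'a list set \<Rightarrow> int \<Rightarrow> bool" where
  "reduced_homology_vanishes K i \<longleftrightarrow>
     (\<forall>c. is_chain K (nat (i + 1)) c \<and> delta_bd K c = (\<lambda>_. 0) \<longrightarrow>
        (\<exists>b. is_chain K (nat (i + 2)) b \<and> delta_bd K b = c))"

definition spherical :: "'a list set \<Rightarrow> int \<Rightarrow> bool" where
  "spherical K d \<longleftrightarrow> (\<exists>s\<in>K. s \<noteq> []) \<and>
     (\<forall>i::int. i \<ge> -1 \<and> i \<noteq> d \<longrightarrow> reduced_homology_vanishes K i)"

definition Xcx :: "nat \<Rightarrow> int list set" where
  "Xcx n = {xs. set xs \<subseteq> {a. a \<noteq> 0 \<and> \<bar>a\<bar> \<le> int n} \<and> distinct (map abs xs)}"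

end

theory Submission
  imports Defs
begin

text \<open>Generalise X(n): for a finite set A of positive integers and F \<subseteq> A, consider the sequences
  with pairwise distinct absolute values in A whose absolute values include F, with the boundary
  that only deletes entries whose absolute value lies outside F.  This is the chain complex of
  the link of F, and X(n) is the case A = {1..n}, F = {}.  It is acyclic below degree |A| - 1,
  by induction on |A - F|: for m \<in> A - F, the part of a cycle c supported on sequences
  containing \<plusminus>m is a cycle of the link of F \<union> {m}, hence a boundary \<partial>b.  Then c - \<partial>b avoids \<plusminus>m,
  and on such chains prepending m is a contracting homotopy, \<partial>(m x) = x - m \<partial>x, so c - \<partial>b is the
  boundary of m (c - \<partial>b).\<close>

section \<open>Deleting an entry of a list\<close>

lemma length_del_nth: "i < length xs \<Longrightarrow> length (del_nth i xs) = length xs - 1"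
  by (simp add: del_nth_def)

lemma nth_del_nth: "i < length xs \<Longrightarrow> k < length xs - 1 \<Longrightarrow>
   del_nth i xs ! k = (if k < i then xs ! k else xs ! Suc k)"
  by (auto simp: del_nth_def nth_append min_def)

lemma del_nth_Cons_0 [simp]: "del_nth 0 (a # xs) = xs"
  by (simp add: del_nth_def)

lemma del_nth_Cons_Suc [simp]: "del_nth (Suc i) (a # xs) = a # del_nth i xs"
  by (simp add: del_nth_def)

lemma map_del_nth: "map f (del_nth i xs) = del_nth i (map f xs)"
  by (simp add: del_nth_def take_map drop_map)

lemma set_del_nth_subset: "set (del_nth i xs) \<subseteq> set xs"
  unfolding del_nth_def using set_take_subset set_drop_subset by fastforce

lemma set_del_nth: "i < length xs \<Longrightarrow> set xs = insert (xs ! i) (set (del_nth i xs))"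
  by (metis del_nth_def id_take_nth_drop Un_insert_right insert_commute list.set(2) set_append)

lemma distinct_del_nth_iff: "i < length xs \<Longrightarrow>
   distinct xs \<longleftrightarrow> distinct (del_nth i xs) \<and> xs ! i \<notin> set (del_nth i xs)"
  by (subst (1 2) id_take_nth_drop[of i xs]) (auto simp: del_nth_def)

lemma del_nth_del_nth: "i \<le> j \<Longrightarrow> Suc j < length xs \<Longrightarrow>
   del_nth i (del_nth (Suc j) xs) = del_nth j (del_nth i xs)"
  by (rule nth_equalityI) (simp_all add: length_del_nth nth_del_nth)

text \<open>The pairs (i, j) with i \<le> j and (Suc j, i) delete the same two entries with opposite signs.\<close>
lemma double_deletion_sum_eq_0:
  fixes s u :: "'a list" and P :: "'a \<Rightarrow> bool"
  shows "(\<Sum>i<length s. \<Sum>j<length s - 1.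
            if P (s ! i) \<and> P (del_nth i s ! j) \<and> del_nth j (del_nth i s) = u
            then (-1::int) ^ (i + j) else 0) = 0"
proof -
  define L where "L = length s"
  define g where "g i j = (if P (s ! i) \<and> P (del_nth i s ! j) \<and> del_nth j (del_nth i s) = u
                           then (-1::int) ^ (i + j) else 0)" for i j
  define T1 where "T1 = {(i, j). i \<le> j \<and> j < L - 1}"
  define T2 where "T2 = {(i, j). j < i \<and> i < L}"
  have antisym: "g (Suc j) i = - g i j" if "i \<le> j" "j < L - 1" for i j
  proof -
    have "del_nth (Suc j) s ! i = s ! i" "del_nth i s ! j = s ! Suc j"
      using that by (simp_all add: nth_del_nth L_def)
    moreover have "del_nth i (del_nth (Suc j) s) = del_nth j (del_nth i s)"
      using that by (intro del_nth_del_nth) (auto simp: L_def)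
    ultimately show ?thesis by (auto simp: g_def add.commute)
  qed
  have finite: "finite T1" "finite T2"
    unfolding T1_def T2_def by (auto intro: finite_subset[of _ "{..<L} \<times> {..<L}"])
  have bij: "bij_betw (\<lambda>(i, j). (Suc j, i)) T1 T2"
    by (rule bij_betw_byWitness[where f' = "\<lambda>(i, j). (j, i - 1)"]) (auto simp: T1_def T2_def)
  have "(\<Sum>i<L. \<Sum>j<L - 1. g i j) = (\<Sum>(i, j)\<in>T1 \<union> T2. g i j)"
    by (simp add: sum.cartesian_product T1_def T2_def) (intro sum.cong; auto)
  also have "\<dots> = (\<Sum>(i, j)\<in>T1. g i j) + (\<Sum>(i, j)\<in>T2. g i j)"
    by (rule sum.union_disjoint[OF finite]) (auto simp: T1_def T2_def)
  also have "(\<Sum>(i, j)\<in>T2. g i j) = (\<Sum>(i, j)\<in>T1. g (Suc j) i)"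
    using sum.reindex_bij_betw[OF bij, of "\<lambda>(i, j). g i j"] by (simp add: split_def)
  also have "(\<Sum>(i, j)\<in>T1. g (Suc j) i) = - (\<Sum>(i, j)\<in>T1. g i j)"
    unfolding sum_negf[symmetric] by (rule sum.cong) (auto simp: T1_def antisym)
  finally show ?thesis by (simp add: L_def g_def)
qed

section \<open>Links in the complex of signed sequences\<close>

definition Xstar :: "int set \<Rightarrow> int set \<Rightarrow> int list set" where
  "Xstar A F = {xs. set xs \<subseteq> {a. a \<noteq> 0 \<and> \<bar>a\<bar> \<in> A} \<and> distinct (map abs xs) \<and> F \<subseteq> abs ` set xs}"

definition face_coeff :: "int set \<Rightarrow> int list \<Rightarrow> int list \<Rightarrow> int" where
  "face_coeff F s t = (\<Sum>i<length s. if \<bar>s ! i\<bar> \<notin> F \<and> del_nth i s = t then (-1) ^ i else 0)"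

definition link_bd :: "int set \<Rightarrow> int set \<Rightarrow> (int list \<Rightarrow> int) \<Rightarrow> int list \<Rightarrow> int" where
  "link_bd A F c t = (\<Sum>s\<in>Xstar A {}. c s * face_coeff F s t)"

definition is_link_chain :: "int set \<Rightarrow> int set \<Rightarrow> nat \<Rightarrow> (int list \<Rightarrow> int) \<Rightarrow> bool" where
  "is_link_chain A F k c \<longleftrightarrow> (\<forall>s. c s \<noteq> 0 \<longrightarrow> s \<in> Xstar A F \<and> length s = k)"

definition cone_at :: "int \<Rightarrow> (int list \<Rightarrow> int) \<Rightarrow> int list \<Rightarrow> int" where
  "cone_at m x s = (if s \<noteq> [] \<and> hd s = m then x (tl s) else 0)"

lemma finite_Xstar:
  assumes "finite A"
  shows "finite (Xstar A F)"
proof -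
  define S where "S = {a::int. a \<noteq> 0 \<and> \<bar>a\<bar> \<in> A}"
  have "S \<subseteq> A \<union> uminus ` A"
  proof
    fix a assume "a \<in> S"
    then show "a \<in> A \<union> uminus ` A"
      by (cases "a \<ge> 0") (auto simp: S_def intro: image_eqI[of _ _ "- a"])
  qed
  then have "finite S" using assms by (simp add: finite_subset)
  moreover have "Xstar A F \<subseteq> {xs. set xs \<subseteq> S \<and> length xs \<le> card S}"
  proof
    fix xs assume "xs \<in> Xstar A F"
    then have "set xs \<subseteq> S" "distinct xs" unfolding Xstar_def S_def by (auto simp: distinct_map)
    then show "xs \<in> {xs. set xs \<subseteq> S \<and> length xs \<le> card S}"
      using card_mono[OF \<open>finite S\<close>] by (metis distinct_card mem_Collect_eq)
  qed
  ultimately show ?thesis using finite_lists_length_le finite_subset by blast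
qed

lemma Xstar_antimono: "F \<subseteq> F' \<Longrightarrow> Xstar A F' \<subseteq> Xstar A F"
  unfolding Xstar_def by auto

lemma del_nth_in_Xstar:
  assumes s: "s \<in> Xstar A F" and i: "i < length s" and "\<bar>s ! i\<bar> \<notin> F"
  shows "del_nth i s \<in> Xstar A F"
proof -
  have "distinct (del_nth i (map abs s))"
    using s i distinct_del_nth_iff[of i "map abs s"] by (simp add: Xstar_def)
  moreover have "abs ` set s = insert \<bar>s ! i\<bar> (abs ` set (del_nth i s))"
    using set_del_nth[OF i] by simp
  ultimately show ?thesis
    using s set_del_nth_subset[of i s] assms(3) by (auto simp: Xstar_def map_del_nth)
qed

lemma Cons_in_Xstar:
  "s \<in> Xstar A F \<Longrightarrow> m \<in> A \<Longrightarrow> m > 0 \<Longrightarrow> m \<notin> abs ` set s \<Longrightarrow> m # s \<in> Xstar A F"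
  unfolding Xstar_def by auto

lemma is_link_chain_antimono: "is_link_chain A F' k c \<Longrightarrow> F \<subseteq> F' \<Longrightarrow> is_link_chain A F k c"
  using Xstar_antimono unfolding is_link_chain_def by blast

lemma link_bd_add: "link_bd A F (\<lambda>s. f s + g s) t = link_bd A F f t + link_bd A F g t"
  unfolding link_bd_def by (simp add: distrib_right sum.distrib)

lemma link_bd_diff: "link_bd A F (\<lambda>s. f s - g s) t = link_bd A F f t - link_bd A F g t"
  unfolding link_bd_def by (simp add: left_diff_distrib sum_subtractf)

lemma link_bd_zero: "link_bd A F (\<lambda>_. 0) = (\<lambda>_. 0)"
  unfolding link_bd_def by simp

lemma sum_face_coeff_face_coeff:
  assumes "finite A" and s: "s \<in> Xstar A {}"
  shows "(\<Sum>t\<in>Xstar A {}. face_coeff F s t * face_coeff F t u) = 0"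
proof -
  define U where "U = Xstar A {}"
  define L where "L = length s"
  have "(\<Sum>t\<in>U. face_coeff F s t * face_coeff F t u)
      = (\<Sum>i<L. \<Sum>t\<in>U. if \<bar>s ! i\<bar> \<notin> F \<and> del_nth i s = t then (-1) ^ i * face_coeff F t u else 0)"
    unfolding face_coeff_def[of F s] L_def sum_distrib_right
    by (subst sum.swap) (intro sum.cong refl; simp)
  also have "\<dots> = (\<Sum>i<L. if \<bar>s ! i\<bar> \<notin> F then (-1) ^ i * face_coeff F (del_nth i s) u else 0)"
  proof (rule sum.cong[OF refl])
    fix i assume "i \<in> {..<L}"
    then have "\<bar>s ! i\<bar> \<notin> F \<Longrightarrow> del_nth i s \<in> U"
      using del_nth_in_Xstar[OF s] unfolding U_def L_def by auto
    then show "(\<Sum>t\<in>U. if \<bar>s ! i\<bar> \<notin> F \<and> del_nth i s = t then (-1) ^ i * face_coeff F t u else 0)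
        = (if \<bar>s ! i\<bar> \<notin> F then (-1) ^ i * face_coeff F (del_nth i s) u else 0)"
      using finite_Xstar[OF \<open>finite A\<close>] unfolding U_def by (simp add: sum.delta)
  qed
  also have "\<dots> = (\<Sum>i<L. \<Sum>j<L - 1.
      if \<bar>s ! i\<bar> \<notin> F \<and> \<bar>del_nth i s ! j\<bar> \<notin> F \<and> del_nth j (del_nth i s) = u
      then (-1) ^ (i + j) else 0)"
    by (intro sum.cong refl)
       (auto simp: face_coeff_def length_del_nth L_def sum_distrib_left power_add intro!: sum.cong)
  also have "\<dots> = 0"
    using double_deletion_sum_eq_0[of "\<lambda>a. \<bar>a\<bar> \<notin> F" s u] by (simp add: L_def)
  finally show ?thesis unfolding U_def .
qed

lemma link_bd_link_bd:
  assumes "finite A"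
  shows "link_bd A F (link_bd A F b) = (\<lambda>_. 0)"
proof
  fix u
  have "link_bd A F (link_bd A F b) u
      = (\<Sum>s\<in>Xstar A {}. b s * (\<Sum>t\<in>Xstar A {}. face_coeff F s t * face_coeff F t u))"
    unfolding link_bd_def sum_distrib_right sum_distrib_left
    by (subst sum.swap) (simp add: mult.assoc)
  then show "link_bd A F (link_bd A F b) u = 0"
    using sum_face_coeff_face_coeff[OF assms] by simp
qed

lemma face_coeff_insert:
  assumes s: "s \<in> Xstar A {}" and "m \<in> abs ` set t"
  shows "face_coeff (insert m F) s t = face_coeff F s t"
  unfolding face_coeff_def
proof (intro sum.cong refl)
  fix i assume i: "i \<in> {..<length s}"
  have "\<bar>s ! i\<bar> \<noteq> m" if "del_nth i s = t"
    using s i assms(2) distinct_del_nth_iff[of i "map abs s"] that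
    by (auto simp: Xstar_def map_del_nth[symmetric])
  then show "(if \<bar>s ! i\<bar> \<notin> insert m F \<and> del_nth i s = t then (-1) ^ i else 0)
      = (if \<bar>s ! i\<bar> \<notin> F \<and> del_nth i s = t then (-1::int) ^ i else 0)"
    by auto
qed

lemma face_coeff_eq_0_if_new_vertex:
  assumes "m \<in> abs ` set t" and "m \<notin> abs ` set s"
  shows "face_coeff F s t = 0"
proof -
  have "del_nth i s \<noteq> t" for i
    using assms set_del_nth_subset[of i s] by auto
  then show ?thesis unfolding face_coeff_def by simp
qed

lemma face_coeff_insert_eq_0_if_lost_vertex:
  assumes "m \<in> abs ` set s" and "m \<notin> abs ` set t"
  shows "face_coeff (insert m F) s t = 0"
proof -
  have "\<not> (\<bar>s ! i\<bar> \<noteq> m \<and> del_nth i s = t)" if "i < length s" for i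
    using assms set_del_nth[OF that] by auto
  then show ?thesis unfolding face_coeff_def by (intro sum.neutral) auto
qed

lemma link_bd_insert:
  "m \<in> abs ` set t \<Longrightarrow> link_bd A (insert m F) c t = link_bd A F c t"
  unfolding link_bd_def by (intro sum.cong refl) (simp add: face_coeff_insert)

text \<open>Restricting a cycle of the link of F to the sequences through \<plusminus>m gives a cycle of the link
  of F \<union> {m}: faces that lose \<plusminus>m are not boundary faces there, and faces through \<plusminus>m only
  come from sequences through \<plusminus>m.\<close>
lemma link_cycle_restrict_to_vertex:
  assumes c: "is_link_chain A F k c" and cycle: "link_bd A F c = (\<lambda>_. 0)"
  shows "is_link_chain A (insert m F) k (\<lambda>s. if m \<in> abs ` set s then c s else 0)"
    and "link_bd A (insert m F) (\<lambda>s. if m \<in> abs ` set s then c s else 0) = (\<lambda>_. 0)"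
proof -
  show "is_link_chain A (insert m F) k (\<lambda>s. if m \<in> abs ` set s then c s else 0)"
    using c by (auto simp: is_link_chain_def Xstar_def)
  show "link_bd A (insert m F) (\<lambda>s. if m \<in> abs ` set s then c s else 0) = (\<lambda>_. 0)"
  proof
    fix t
    show "link_bd A (insert m F) (\<lambda>s. if m \<in> abs ` set s then c s else 0) t = 0"
    proof (cases "m \<in> abs ` set t")
      case True
      then have "link_bd A (insert m F) (\<lambda>s. if m \<in> abs ` set s then c s else 0) t = link_bd A F c t"
        unfolding link_bd_def
        by (intro sum.cong refl) (simp add: face_coeff_insert face_coeff_eq_0_if_new_vertex)
      then show ?thesis using cycle by simp
    next
      case False
      then show ?thesis
        unfolding link_bd_def by (intro sum.neutral) (simp add: face_coeff_insert_eq_0_if_lost_vertex)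
    qed
  qed
qed

lemma is_link_chain_link_bd:
  assumes b: "is_link_chain A F (Suc k) b"
  shows "is_link_chain A F k (link_bd A F b)"
  unfolding is_link_chain_def
proof (intro allI impI)
  fix t assume "link_bd A F b t \<noteq> 0"
  then obtain s where "b s * face_coeff F s t \<noteq> 0"
    unfolding link_bd_def by (rule sum.not_neutral_contains_not_neutral)
  then have "b s \<noteq> 0" and "face_coeff F s t \<noteq> 0" by simp_all
  from \<open>face_coeff F s t \<noteq> 0\<close> obtain i where "i < length s" "(if \<bar>s ! i\<bar> \<notin> F \<and> del_nth i s = t then (-1::int) ^ i else 0) \<noteq> 0"
    unfolding face_coeff_def by (rule sum.not_neutral_contains_not_neutral) simp
  then have i: "i < length s" "\<bar>s ! i\<bar> \<notin> F" "del_nth i s = t"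
    by (simp_all split: if_splits)
  moreover have "s \<in> Xstar A F" "length s = Suc k"
    using b \<open>b s \<noteq> 0\<close> unfolding is_link_chain_def by auto
  ultimately show "t \<in> Xstar A F \<and> length t = k"
    using del_nth_in_Xstar[of s A F i] length_del_nth[of i s] by auto
qed

lemma face_coeff_Cons:
  "face_coeff F (a # s) t = (if \<bar>a\<bar> \<notin> F \<and> s = t then 1 else 0)
     - (if t \<noteq> [] \<and> hd t = a then face_coeff F s (tl t) else 0)"
proof (cases t)
  case Nil
  then show ?thesis
    unfolding face_coeff_def by (simp add: sum.lessThan_Suc_shift del: sum.lessThan_Suc)
next
  case (Cons b t')
  have "(\<Sum>i<length s. if \<bar>s ! i\<bar> \<notin> F \<and> a # del_nth i s = b # t' then (-1::int) ^ Suc i else 0)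
      = - (if b = a then face_coeff F s t' else 0)"
    by (cases "b = a") (auto simp: face_coeff_def sum_negf[symmetric] intro!: sum.cong)
  then show ?thesis
    using Cons unfolding face_coeff_def by (simp add: sum.lessThan_Suc_shift del: sum.lessThan_Suc)
qed

lemma link_bd_cone_at:
  assumes "finite A" and m: "m \<in> A" "m > 0" "m \<notin> F"
    and x: "\<And>s. x s \<noteq> 0 \<Longrightarrow> s \<in> Xstar A {} \<and> m \<notin> abs ` set s"
  shows "link_bd A F (cone_at m x) t = x t - cone_at m (link_bd A F x) t"
proof -
  define U where "U = Xstar A {}"
  define S where "S = {s \<in> U. m \<notin> abs ` set s}"
  have "finite U" unfolding U_def using finite_Xstar[OF \<open>finite A\<close>] .
  have "S \<subseteq> U" "Cons m ` S \<subseteq> U"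
    unfolding S_def U_def using Cons_in_Xstar[OF _ m(1,2)] by auto
  have "link_bd A F (cone_at m x) t = (\<Sum>s\<in>Cons m ` S. cone_at m x s * face_coeff F s t)"
    unfolding link_bd_def U_def[symmetric]
  proof (rule sum.mono_neutral_right[OF \<open>finite U\<close> \<open>Cons m ` S \<subseteq> U\<close>], intro ballI)
    fix s assume s: "s \<in> U - Cons m ` S"
    have "s \<noteq> m # tl s \<or> tl s \<notin> S" using s by auto
    then show "cone_at m x s * face_coeff F s t = 0"
      using x[of "tl s"] by (cases s) (auto simp: cone_at_def S_def U_def)
  qed
  also have "\<dots> = (\<Sum>s\<in>S. x s * face_coeff F (m # s) t)"
    by (subst sum.reindex) (auto simp: cone_at_def)
  also have "\<dots> = (\<Sum>s\<in>S. if s = t then x s else 0)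
      - (if t \<noteq> [] \<and> hd t = m then (\<Sum>s\<in>S. x s * face_coeff F s (tl t)) else 0)"
    using m by (simp add: face_coeff_Cons right_diff_distrib sum_subtractf
                  if_distrib[of "\<lambda>z. _ * z"] cong: if_cong)
  also have "(\<Sum>s\<in>S. if s = t then x s else 0) = x t"
    using finite_subset[OF \<open>S \<subseteq> U\<close> \<open>finite U\<close>] x unfolding S_def U_def by (auto simp: sum.delta)
  also have "(\<Sum>s\<in>S. x s * face_coeff F s (tl t)) = link_bd A F x (tl t)"
    unfolding link_bd_def U_def[symmetric]
    by (rule sum.mono_neutral_left[OF \<open>finite U\<close> \<open>S \<subseteq> U\<close>]) (use x in \<open>auto simp: S_def U_def\<close>)
  finally show ?thesis unfolding cone_at_def[of m "link_bd A F x"] .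
qed

lemma is_link_chain_add:
  "is_link_chain A F k c \<Longrightarrow> is_link_chain A F k d \<Longrightarrow> is_link_chain A F k (\<lambda>s. c s + d s)"
  unfolding is_link_chain_def by (metis add.right_neutral add_0)

lemma is_link_chain_diff:
  "is_link_chain A F k c \<Longrightarrow> is_link_chain A F k d \<Longrightarrow> is_link_chain A F k (\<lambda>s. c s - d s)"
  unfolding is_link_chain_def by (metis diff_0_right diff_self)

lemma link_chain_eq_0_if_covered:
  assumes "A \<subseteq> F" and "k < card A" and c: "is_link_chain A F k c"
  shows "c = (\<lambda>_. 0)"
proof
  fix s show "c s = 0"
  proof (rule ccontr)
    assume "c s \<noteq> 0"
    then have "s \<in> Xstar A F" and "length s = k"
      using c unfolding is_link_chain_def by auto
    then have "A \<subseteq> abs ` set s" and "length s = k"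
      using assms(1) unfolding Xstar_def by auto
    then have "card A \<le> k"
      by (metis List.finite_set card_image_le card_length card_mono finite_imageI le_trans)
    then show False using assms(2) by simp
  qed
qed

lemma link_cycle_avoiding_vertex_is_boundary:
  assumes "finite A" and m: "m \<in> A" "m > 0" "m \<notin> F"
    and x: "is_link_chain A F k x" "link_bd A F x = (\<lambda>_. 0)" "\<And>s. x s \<noteq> 0 \<Longrightarrow> m \<notin> abs ` set s"
  shows "is_link_chain A F (Suc k) (cone_at m x)" and "link_bd A F (cone_at m x) = x"
proof -
  have x_support: "x s \<noteq> 0 \<Longrightarrow> s \<in> Xstar A {} \<and> m \<notin> abs ` set s" for s
    using x(1,3) Xstar_antimono[of "{}" F A] unfolding is_link_chain_def by blast
  have "link_bd A F (cone_at m x) t = x t - cone_at m (link_bd A F x) t" for t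
    by (rule link_bd_cone_at[OF assms(1-4)]) (rule x_support)
  then show "link_bd A F (cone_at m x) = x"
    using x(2) by (simp add: fun_eq_iff cone_at_def)
  show "is_link_chain A F (Suc k) (cone_at m x)"
    unfolding is_link_chain_def
  proof (intro allI impI)
    fix s assume "cone_at m x s \<noteq> 0"
    then have "s = m # tl s" and "x (tl s) \<noteq> 0"
      by (cases s; simp add: cone_at_def split: if_splits)+
    then show "s \<in> Xstar A F \<and> length s = Suc k"
      using x(1) x_support Cons_in_Xstar[OF _ m(1,2)] unfolding is_link_chain_def by (metis length_Cons)
  qed
qed

lemma link_cycle_is_boundary:
  assumes "finite A" and pos: "\<forall>a\<in>A. a > 0"
    and "F \<subseteq> A" "k < card A" "is_link_chain A F k c" "link_bd A F c = (\<lambda>_. 0)"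
  shows "\<exists>b. is_link_chain A F (Suc k) b \<and> link_bd A F b = c"
  using assms(3-6)
proof (induction "card (A - F)" arbitrary: F c rule: less_induct)
  case less
  note c = less.prems(3,4)
  show ?case
  proof (cases "A \<subseteq> F")
    case True
    then have "c = (\<lambda>_. 0)" using link_chain_eq_0_if_covered less.prems by blast
    then show ?thesis by (intro exI[of _ "\<lambda>_. 0"]) (simp add: is_link_chain_def link_bd_zero)
  next
    case False
    then obtain m where m: "m \<in> A" "m \<notin> F" by blast
    define c' where "c' s = (if m \<in> abs ` set s then c s else 0)" for s
    have "card (A - insert m F) < card (A - F)"
      using m \<open>finite A\<close> by (intro psubset_card_mono) auto
    then obtain b where b: "is_link_chain A (insert m F) (Suc k) b" "link_bd A (insert m F) b = c'"
      using less.hyps[of "insert m F" c'] less.prems(1,2) m(1) link_cycle_restrict_to_vertex[OF c]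
      unfolding c'_def by auto
    have b_chain: "is_link_chain A F (Suc k) b"
      using b(1) by (rule is_link_chain_antimono) auto
    define x where "x s = c s - link_bd A F b s" for s
    have "is_link_chain A F k x"
      unfolding x_def using c(1) is_link_chain_link_bd[OF b_chain] by (rule is_link_chain_diff)
    moreover have "link_bd A F x = (\<lambda>_. 0)"
      using c(2) link_bd_link_bd[OF \<open>finite A\<close>] unfolding x_def[abs_def] by (simp add: fun_eq_iff link_bd_diff)
    moreover have "x s = 0" if "m \<in> abs ` set s" for s
      using that fun_cong[OF b(2), of s] by (simp add: x_def c'_def link_bd_insert)
    ultimately obtain y where "is_link_chain A F (Suc k) y" "link_bd A F y = x"
      using link_cycle_avoiding_vertex_is_boundary[OF \<open>finite A\<close> m(1) _ m(2)] pos m(1) by blast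
    moreover from \<open>link_bd A F y = x\<close> have "link_bd A F (\<lambda>s. b s + y s) = c"
      unfolding fun_eq_iff x_def by (simp add: link_bd_add)
    ultimately show ?thesis
      using b_chain is_link_chain_add by blast
  qed
qed

section \<open>The complex X(n)\<close>

lemma Xcx_eq_Xstar: "Xcx n = Xstar {1..int n} {}"
  unfolding Xcx_def Xstar_def by (intro Collect_cong) auto

lemma is_chain_Xcx_iff: "is_chain (Xcx n) k c \<longleftrightarrow> is_link_chain {1..int n} {} k c"
  unfolding is_chain_def is_link_chain_def Xcx_eq_Xstar ..

lemma face_coeff_eq_0_if_length_ne: "length s \<noteq> Suc (length t) \<Longrightarrow> face_coeff F s t = 0"
  unfolding face_coeff_def by (intro sum.neutral) (auto simp: length_del_nth)

lemma delta_bd_Xcx: "delta_bd (Xcx n) c = link_bd {1..int n} {} c"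
proof
  fix t
  have "finite (Xcx n)" unfolding Xcx_eq_Xstar by (rule finite_Xstar) simp
  then have "delta_bd (Xcx n) c t = (\<Sum>s\<in>Xcx n. c s * face_coeff {} s t)"
    unfolding delta_bd_def face_coeff_def[of "{}", simplified, symmetric]
    by (intro sum.mono_neutral_left) (auto simp: face_coeff_eq_0_if_length_ne)
  then show "delta_bd (Xcx n) c t = link_bd {1..int n} {} c t"
    unfolding link_bd_def Xcx_eq_Xstar .
qed

lemma length_le_if_in_Xcx:
  assumes "s \<in> Xcx n"
  shows "length s \<le> n"
proof -
  have "length s = card (abs ` set s)" and "abs ` set s \<subseteq> {1..int n}"
    using assms distinct_card[of "map abs s"] by (auto simp: Xcx_def)
  then show ?thesis by (metis card_atLeastAtMost_int card_mono diff_add_cancel finite_atLeastAtMost_int nat_int)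
qed

lemma Xcx_reduced_homology_vanishes_below:
  assumes "-1 \<le> i" and "i < int n - 1"
  shows "reduced_homology_vanishes (Xcx n) i"
  unfolding reduced_homology_vanishes_def is_chain_Xcx_iff delta_bd_Xcx
proof (intro allI impI)
  fix c assume "is_link_chain {1..int n} {} (nat (i + 1)) c \<and> link_bd {1..int n} {} c = (\<lambda>_. 0)"
  moreover have "nat (i + 1) < card {1..int n}" and "nat (i + 2) = Suc (nat (i + 1))"
    using assms by auto
  ultimately show "\<exists>b. is_link_chain {1..int n} {} (nat (i + 2)) b \<and> link_bd {1..int n} {} b = c"
    using link_cycle_is_boundary[of "{1..int n}" "{}" "nat (i + 1)" c] by auto
qed

lemma Xcx_reduced_homology_vanishes_above:
  assumes "int n \<le> i"
  shows "reduced_homology_vanishes (Xcx n) i"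
  unfolding reduced_homology_vanishes_def
proof (intro allI impI)
  fix c assume "is_chain (Xcx n) (nat (i + 1)) c \<and> delta_bd (Xcx n) c = (\<lambda>_. 0)"
  then have "c = (\<lambda>_. 0)"
    using assms length_le_if_in_Xcx[of _ n] unfolding is_chain_def by fastforce
  then show "\<exists>b. is_chain (Xcx n) (nat (i + 2)) b \<and> delta_bd (Xcx n) b = c"
    by (intro exI[of _ "\<lambda>_. 0"]) (simp add: is_chain_def delta_bd_def)
qed

theorem mainTheorem6:
  fixes n :: nat
  assumes "n \<ge> 1"
  shows "spherical (Xcx n) (int n - 1)"
  unfolding spherical_def
proof (intro conjI allI impI)
  show "\<exists>s\<in>Xcx n. s \<noteq> []"
    using assms by (intro bexI[of _ "[1]"]) (auto simp: Xcx_def)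
  fix i :: int assume "-1 \<le> i \<and> i \<noteq> int n - 1"
  then show "reduced_homology_vanishes (Xcx n) i"
    using Xcx_reduced_homology_vanishes_below Xcx_reduced_homology_vanishes_above
    by (cases "i < int n - 1") auto
qed

end
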